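(* Let $\Gamma$ be a connected graph on vertices $\{1,\dots,N\}$ containing all loops $(i,i)$. Then there is an open, everywhere dense subset $\mathbf H_\Gamma^{(+)}\subset\mathbf H_\Gamma$ whose complement $\mathbf H_\Gamma\setminus\mathbf H_\Gamma^{(+)}$ has dimension smaller than $\dim\mathbf H_\Gamma$, such that $\dim L_0(V)=0$ (i.e. $l_V=\mathbb R^N$) for every $V\in\mathbf H_\Gamma^{(+)}$.
   Context: $\mathbf H_\Gamma$ is the set of real symmetric positive-definite $N\times N$ matrices $V$ with $V(i,j)=0$ whenever $(i,j)$ is not an edge of $\Gamma$; it is an open subset of a real vector space whose dimension equals the number of edges of $\Gamma$ (loops included). $l_V$ is the span of $V^ke_1$, $k\ge0$, where $e_1$ is the first standard basis vector (vertex $1$ is the particle in contact with the environment); $L_-(V)=\{(q,p)\in\mathbb R^{2N}:q,p\in l_V\}$ and $L_0(V)$ is its orthogonal complement. *)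

theory Defs
  imports "HOL-Analysis.Analysis"
begin

definition edge_space :: "('n::finite \<Rightarrow> 'n \<Rightarrow> bool) \<Rightarrow> (real^'n^'n) set" where
  "edge_space E = {V. transpose V = V \<and> (\<forall>i j. \<not> E i j \<longrightarrow> V $ i $ j = 0)}"

definition H_Gamma :: "('n::finite \<Rightarrow> 'n \<Rightarrow> bool) \<Rightarrow> (real^'n^'n) set" where
  "H_Gamma E = {V \<in> edge_space E. \<forall>x. x \<noteq> 0 \<longrightarrow> x \<bullet> (V *v x) > 0}"

text \<open>l_V = span of V^k e_1, k \<ge> 0, where e_1 is the basis vector of the vertex v1.\<close>
definition l_V :: "'n::finite \<Rightarrow> real^'n^'n \<Rightarrow> (real^'n) set" where
  "l_V v1 V = span (range (\<lambda>k. ((\<lambda>x. V *v x) ^^ k) (axis v1 1)))"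

definition L_minus :: "'n::finite \<Rightarrow> real^'n^'n \<Rightarrow> ((real^'n) \<times> (real^'n)) set" where
  "L_minus v1 V = {(q, p). q \<in> l_V v1 V \<and> p \<in> l_V v1 V}"

definition L_0 :: "'n::finite \<Rightarrow> real^'n^'n \<Rightarrow> ((real^'n) \<times> (real^'n)) set" where
  "L_0 v1 V = {z. \<forall>y \<in> L_minus v1 V. z \<bullet> y = 0}"

inductive_set poly_funs :: "((real^'n::finite^'n) \<Rightarrow> real) set" where
  const: "(\<lambda>V. c) \<in> poly_funs"
| coord: "(\<lambda>V. V $ i $ j) \<in> poly_funs"
| add: "p \<in> poly_funs \<Longrightarrow> q \<in> poly_funs \<Longrightarrow> (\<lambda>V. p V + q V) \<in> poly_funs"
| mult: "p \<in> poly_funs \<Longrightarrow> q \<in> poly_funs \<Longrightarrow> (\<lambda>V. p V * q V) \<in> poly_funs"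

text \<open>A subset A of H_Gamma has dimension smaller than dim H_Gamma (= dim edge_space):
  A lies in a proper real algebraic subset of the linear space edge_space E, i.e. in the
  zero set of a polynomial not vanishing identically on edge_space E.\<close>
definition lower_dim :: "('n::finite \<Rightarrow> 'n \<Rightarrow> bool) \<Rightarrow> (real^'n^'n) set \<Rightarrow> bool" where
  "lower_dim E A \<longleftrightarrow> (\<exists>p \<in> poly_funs. (\<exists>V \<in> edge_space E. p V \<noteq> 0) \<and> (\<forall>V \<in> A. p V = 0))"

end

theory Submission
  imports Defs "HOL-Computational_Algebra.Polynomial"
begin

(* The Gram determinant of the Krylov vectors e_1, V e_1, ..., V^(N-1) e_1 is a polynomial in the
   entries of V that vanishes exactly when l_V is a proper subspace. Hence it suffices to exhibit one
   V in H_Gamma with l_V = R^N: the set where the determinant does not vanish is then relatively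
   open, it is dense because H_Gamma is convex and a polynomial that is nonzero at one point of a
   segment has only finitely many zeros on it, and its complement lies in a proper algebraic set.

   Such a V is grown one vertex at a time. Suppose W is supported on the vertex set S, e_1 is cyclic
   for W modulo the coordinates outside S, and s-u is an edge leaving S. For large c the border
   matrix W + c e_u e_u^T + e_u e_s^T is then cyclic on S + u; by genericity this survives adding
   sigma e_s e_u^T for some small sigma > 0, and conjugation by the diagonal matrix with entry
   sqrt sigma at u turns the result into a symmetric matrix with the sparsity pattern of Gamma.
   Finally, adding a large multiple of the identity makes it positive definite without changing
   the Krylov space. *)

section \<open>Polynomial functions of the matrix entries\<close>

lemma poly_funs_sum:
  assumes "finite A" "\<And>a. a \<in> A \<Longrightarrow> f a \<in> poly_funs"
  shows "(\<lambda>V. \<Sum>a\<in>A. f a V) \<in> poly_funs"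
  using assms
proof (induction A rule: finite_induct)
  case empty
  then show ?case using poly_funs.const[of 0] by simp
next
  case (insert x F)
  then show ?case using poly_funs.add[of "f x" "\<lambda>V. \<Sum>a\<in>F. f a V"] by simp
qed

lemma poly_funs_prod:
  assumes "finite A" "\<And>a. a \<in> A \<Longrightarrow> f a \<in> poly_funs"
  shows "(\<lambda>V. \<Prod>a\<in>A. f a V) \<in> poly_funs"
  using assms
proof (induction A rule: finite_induct)
  case empty
  then show ?case using poly_funs.const[of 1] by simp
next
  case (insert x F)
  then show ?case using poly_funs.mult[of "f x" "\<lambda>V. \<Prod>a\<in>F. f a V"] by simp
qed

lemma poly_funs_det:
  fixes F :: "real^'n::finite^'n \<Rightarrow> real^'m::finite^'m"
  assumes "\<And>i j. (\<lambda>V. F V $ i $ j) \<in> poly_funs"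
  shows "(\<lambda>V. det (F V)) \<in> poly_funs"
  unfolding det_def
  by (intro poly_funs_sum poly_funs.mult[OF poly_funs.const] poly_funs_prod assms) auto

lemma poly_funs_on_line:
  assumes "p \<in> poly_funs"
  obtains P where "\<And>t. p (A + t *\<^sub>R D) = poly P t"
proof -
  from assms have "\<exists>P. \<forall>t. p (A + t *\<^sub>R D) = poly P t"
  proof (induction rule: poly_funs.induct)
    case (const c)
    show ?case by (intro exI[of _ "[:c:]"]) simp
  next
    case (coord i j)
    show ?case by (intro exI[of _ "[:A$i$j, D$i$j:]"]) (simp add: algebra_simps)
  next
    case (add p q)
    then obtain P Q where "\<forall>t. p (A + t *\<^sub>R D) = poly P t" "\<forall>t. q (A + t *\<^sub>R D) = poly Q t"
      by blast
    then show ?case by (intro exI[of _ "P + Q"]) simp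
  next
    case (mult p q)
    then obtain P Q where "\<forall>t. p (A + t *\<^sub>R D) = poly P t" "\<forall>t. q (A + t *\<^sub>R D) = poly Q t"
      by blast
    then show ?case by (intro exI[of _ "P * Q"]) simp
  qed
  with that show thesis by blast
qed

lemma poly_funs_nonzero_near:
  assumes "p \<in> poly_funs" "p (A + t\<^sub>0 *\<^sub>R D) \<noteq> 0" "e > 0"
  obtains t where "0 < t" "t < e" "p (A + t *\<^sub>R D) \<noteq> 0"
proof -
  obtain P where P: "\<And>t. p (A + t *\<^sub>R D) = poly P t"
    using poly_funs_on_line[OF assms(1)] by blast
  have "P \<noteq> 0" using assms(2) P by auto
  then have "finite {t. poly P t = 0}" by (rule poly_roots_finite)
  moreover have "infinite {0<..<e}" using assms(3) by simp
  ultimately have "\<not> {0<..<e} \<subseteq> {t. poly P t = 0}" using finite_subset by blast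
  then obtain t where "t \<in> {0<..<e}" "poly P t \<noteq> 0" by blast
  then show thesis using that[of t] P by simp
qed

lemma continuous_on_poly_funs: "p \<in> poly_funs \<Longrightarrow> continuous_on UNIV p"
proof (induction rule: poly_funs.induct)
  case (coord i j)
  have "bounded_linear (\<lambda>V::real^'a^'a. V $ i $ j)"
    using bounded_linear_compose[OF bounded_linear_vec_nth bounded_linear_vec_nth] by blast
  then show ?case by (simp add: linear_continuous_on)
qed (auto intro: continuous_intros)

lemma openin_poly_funs_nonzero:
  assumes "p \<in> poly_funs"
  shows "openin (top_of_set A) {V \<in> A. p V \<noteq> 0}"
proof -
  have "open {V. p V \<noteq> 0}"
    by (rule open_Collect_neq[OF continuous_on_poly_funs[OF assms] continuous_on_const])
  then have "openin (top_of_set A) (A \<inter> {V. p V \<noteq> 0})" by (rule openin_open_Int)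
  moreover have "A \<inter> {V. p V \<noteq> 0} = {V \<in> A. p V \<noteq> 0}" by blast
  ultimately show ?thesis by simp
qed

lemma convex_subset_closure_poly_funs_nonzero:
  assumes "convex C" "p \<in> poly_funs" "W \<in> C" "p W \<noteq> 0"
  shows "C \<subseteq> closure {V \<in> C. p V \<noteq> 0}"
proof
  fix V assume V: "V \<in> C"
  show "V \<in> closure {V \<in> C. p V \<noteq> 0}"
    unfolding closure_approachable
  proof (intro allI impI)
    fix e :: real assume "e > 0"
    define d where "d = norm (W - V) + 1"
    have "d > 0" by (simp add: d_def add_nonneg_pos)
    have "p (V + 1 *\<^sub>R (W - V)) \<noteq> 0" using assms(4) by simp
    moreover have "min 1 (e / d) > 0" using \<open>e > 0\<close> \<open>d > 0\<close> by simp
    ultimately obtain t where t: "0 < t" "t < min 1 (e / d)" "p (V + t *\<^sub>R (W - V)) \<noteq> 0"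
      using poly_funs_nonzero_near[OF assms(2)] by blast
    have "(1 - t) *\<^sub>R V + t *\<^sub>R W \<in> C"
      using convexD[OF assms(1) V assms(3), of "1 - t" t] t by simp
    moreover have "V + t *\<^sub>R (W - V) = (1 - t) *\<^sub>R V + t *\<^sub>R W" by (simp add: algebra_simps)
    ultimately have "V + t *\<^sub>R (W - V) \<in> C" by simp
    moreover have "dist (V + t *\<^sub>R (W - V)) V < e"
    proof -
      have "dist (V + t *\<^sub>R (W - V)) V = t * norm (W - V)" using t by (simp add: dist_norm)
      also have "\<dots> \<le> t * d" using t by (simp add: d_def)
      also have "\<dots> < e" using t \<open>d > 0\<close> by (simp add: less_divide_eq)
      finally show ?thesis .
    qed
    ultimately show "\<exists>y\<in>{V \<in> C. p V \<noteq> 0}. dist y V < e" using t(3) by blast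
  qed
qed

lemma transpose_eq_self_iff: "transpose V = V \<longleftrightarrow> (\<forall>i j. V $ j $ i = V $ i $ j)"
  unfolding transpose_def vec_eq_iff by simp

lemma subspace_symmetric_matrices: "subspace {V :: real^'n^'n. transpose V = V}"
  unfolding transpose_eq_self_iff subspace_def by simp

lemma subspace_vanishing_entries: "subspace {V :: real^'n^'m. \<forall>i j. P i j \<longrightarrow> V $ i $ j = 0}"
  by (simp add: subspace_def)

lemma subspace_edge_space: "subspace (edge_space E)"
proof -
  have "edge_space E = {V. transpose V = V} \<inter> {V. \<forall>i j. \<not> E i j \<longrightarrow> V $ i $ j = 0}"
    by (auto simp: edge_space_def)
  then show ?thesis
    using subspace_inter[OF subspace_symmetric_matrices subspace_vanishing_entries] by simp
qed

lemma convex_H_Gamma: "convex (H_Gamma E)"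
proof (rule convexI)
  fix V W and u v :: real
  assume V: "V \<in> H_Gamma E" and W: "W \<in> H_Gamma E" and uv: "0 \<le> u" "0 \<le> v" "u + v = 1"
  have "u *\<^sub>R V + v *\<^sub>R W \<in> edge_space E"
    using V W subspace_edge_space by (auto simp: H_Gamma_def intro: subspace_add subspace_scale)
  moreover have "x \<bullet> ((u *\<^sub>R V + v *\<^sub>R W) *v x) > 0" if "x \<noteq> 0" for x
  proof -
    have "x \<bullet> (V *v x) > 0" "x \<bullet> (W *v x) > 0" using V W that by (auto simp: H_Gamma_def)
    moreover have "x \<bullet> ((u *\<^sub>R V + v *\<^sub>R W) *v x) = u * (x \<bullet> (V *v x)) + v * (x \<bullet> (W *v x))"
      by (simp add: matrix_vector_mult_add_rdistrib scaleR_matrix_vector_assoc[symmetric] inner_add_right)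
    ultimately show ?thesis using uv
      by (cases "u = 0") (auto intro: add_pos_nonneg)
  qed
  ultimately show "u *\<^sub>R V + v *\<^sub>R W \<in> H_Gamma E" by (simp add: H_Gamma_def)
qed

section \<open>Krylov vectors and cyclicity\<close>

definition krylov :: "'n::finite \<Rightarrow> real^'n^'n \<Rightarrow> nat \<Rightarrow> real^'n" where
  "krylov v1 V k = ((\<lambda>x. V *v x) ^^ k) (axis v1 1)"

lemma krylov_0 [simp]: "krylov v1 V 0 = axis v1 1"
  by (simp add: krylov_def)

lemma krylov_Suc: "krylov v1 V (Suc k) = V *v krylov v1 V k"
  by (simp add: krylov_def)

lemma l_V_eq_span_krylov: "l_V v1 V = span (range (krylov v1 V))"
  by (simp add: l_V_def krylov_def[abs_def])

lemma poly_funs_krylov: "(\<lambda>V. krylov v1 V k $ i) \<in> poly_funs"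
proof (induction k arbitrary: i)
  case 0
  show ?case using poly_funs.const by simp
next
  case (Suc k)
  have "(\<lambda>V. \<Sum>j\<in>UNIV. V $ i $ j * krylov v1 V k $ j) \<in> poly_funs"
    by (intro poly_funs_sum poly_funs.mult poly_funs.coord Suc) auto
  then show ?case by (simp add: krylov_Suc matrix_vector_mult_def)
qed

lemma matrix_vector_mult_span_krylov:
  assumes "y \<in> span (range (krylov v1 V))"
  shows "V *v y \<in> span (range (krylov v1 V))"
proof -
  have "(\<lambda>x. V *v x) ` range (krylov v1 V) \<subseteq> range (krylov v1 V)"
    by (auto simp: krylov_Suc[symmetric])
  then have "span ((\<lambda>x. V *v x) ` range (krylov v1 V)) \<subseteq> span (range (krylov v1 V))"
    by (rule span_mono)
  then show ?thesis
    using assms by (auto simp: span_linear_image[OF matrix_vector_mul_linear])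
qed

lemma krylov_in_span_prefix:
  assumes "krylov v1 V n \<in> span (krylov v1 V ` {..<n})"
  shows "krylov v1 V k \<in> span (krylov v1 V ` {..<n})"
proof (induction k)
  case 0
  show ?case
  proof (cases "n = 0")
    case True
    with assms show ?thesis by simp
  next
    case False
    then have "krylov v1 V 0 \<in> krylov v1 V ` {..<n}" by blast
    then show ?thesis by (rule span_base)
  qed
next
  case (Suc k)
  have "V *v krylov v1 V j \<in> span (krylov v1 V ` {..<n})" if "j < n" for j
  proof (cases "Suc j < n")
    case True
    then show ?thesis by (auto simp: krylov_Suc[symmetric] intro: span_base)
  next
    case False
    with that have "Suc j = n" by simp
    with assms show ?thesis by (simp add: krylov_Suc[symmetric])
  qed
  then have "span ((\<lambda>x. V *v x) ` krylov v1 V ` {..<n}) \<subseteq> span (krylov v1 V ` {..<n})"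
    by (intro span_minimal) auto
  then have "(\<lambda>x. V *v x) ` span (krylov v1 V ` {..<n}) \<subseteq> span (krylov v1 V ` {..<n})"
    by (simp add: span_linear_image[OF matrix_vector_mul_linear])
  then show ?case using Suc by (auto simp: krylov_Suc)
qed

lemma independent_krylov_prefix:
  assumes "\<And>m. m < n \<Longrightarrow> krylov v1 V m \<notin> span (krylov v1 V ` {..<m})"
  shows "independent (krylov v1 V ` {..<n}) \<and> card (krylov v1 V ` {..<n}) = n"
  using assms
proof (induction n)
  case 0
  show ?case by (simp add: independent_empty)
next
  case (Suc n)
  then have IH: "independent (krylov v1 V ` {..<n})" "card (krylov v1 V ` {..<n}) = n"
    by simp_all
  have new: "krylov v1 V n \<notin> span (krylov v1 V ` {..<n})" using Suc.prems by simp
  then have "krylov v1 V n \<notin> krylov v1 V ` {..<n}" by (metis span_base)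
  with new IH show ?case
    by (simp add: lessThan_Suc independent_insertI card_insert_disjoint)
qed

lemma krylov_in_span_first:
  fixes v1 :: "'n::finite"
  shows "krylov v1 V k \<in> span (krylov v1 V ` {..<CARD('n)})"
proof -
  obtain n where n: "n \<le> CARD('n)" "krylov v1 V n \<in> span (krylov v1 V ` {..<n})"
  proof (rule ccontr)
    assume "\<not> thesis"
    with that have "\<And>m. m < Suc CARD('n) \<Longrightarrow> krylov v1 V m \<notin> span (krylov v1 V ` {..<m})"
      by force
    then have "independent (krylov v1 V ` {..<Suc CARD('n)})"
      and "card (krylov v1 V ` {..<Suc CARD('n)}) = Suc CARD('n)"
      using independent_krylov_prefix by blast+
    then show False using independent_bound by fastforce
  qed
  have "krylov v1 V k \<in> span (krylov v1 V ` {..<n})" by (rule krylov_in_span_prefix[OF n(2)])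
  also have "span (krylov v1 V ` {..<n}) \<subseteq> span (krylov v1 V ` {..<CARD('n)})"
    using n(1) by (intro span_mono image_mono) auto
  finally show ?thesis .
qed

lemma orthogonal_krylov_first_imp_all:
  fixes x :: "real^'n::finite"
  assumes "\<And>k. k < CARD('n) \<Longrightarrow> x \<bullet> krylov v1 V k = 0"
  shows "x \<bullet> krylov v1 V k = 0"
  using orthogonal_to_span[OF krylov_in_span_first[of v1 V k], of x] assms
  by (auto simp: orthogonal_def)

definition supported :: "'n set \<Rightarrow> real^'n \<Rightarrow> bool" where
  "supported S x \<longleftrightarrow> (\<forall>i. i \<notin> S \<longrightarrow> x $ i = 0)"

text \<open>The Krylov space of \<open>V\<close> projects onto the coordinate space \<open>\<real>\<^sup>S\<close>; for \<open>S = UNIV\<close> this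
  says \<open>l_V = \<real>\<^sup>N\<close>.\<close>

definition cyclic_on :: "'n::finite \<Rightarrow> 'n set \<Rightarrow> real^'n^'n \<Rightarrow> bool" where
  "cyclic_on v1 S V \<longleftrightarrow> (\<forall>x. supported S x \<longrightarrow> (\<forall>k. x \<bullet> krylov v1 V k = 0) \<longrightarrow> x = 0)"

text \<open>The identity block on the coordinates outside \<open>S\<close> forces kernel vectors to be supported
  on \<open>S\<close>, so the determinant detects cyclicity on \<open>S\<close> polynomially.\<close>

definition gram_matrix :: "'n::finite \<Rightarrow> 'n set \<Rightarrow> real^'n^'n \<Rightarrow> real^'n^'n" where
  "gram_matrix v1 S V = (\<chi> i j. (\<Sum>k<CARD('n). krylov v1 V k $ i * krylov v1 V k $ j)
                                  + (if i = j \<and> i \<notin> S then 1 else 0))"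

lemma poly_funs_det_gram_matrix: "(\<lambda>V. det (gram_matrix v1 S V)) \<in> poly_funs"
proof (rule poly_funs_det)
  fix i j
  have "(\<lambda>V. (\<Sum>k<CARD('a). krylov v1 V k $ i * krylov v1 V k $ j)
             + (if i = j \<and> i \<notin> S then 1 else 0)) \<in> poly_funs"
    by (intro poly_funs.add poly_funs_sum poly_funs.mult poly_funs_krylov poly_funs.const) auto
  then show "(\<lambda>V. gram_matrix v1 S V $ i $ j) \<in> poly_funs" by (simp add: gram_matrix_def)
qed

lemma gram_matrix_mult:
  fixes x :: "real^'n::finite"
  shows "gram_matrix v1 S V *v x
           = (\<Sum>k<CARD('n). (krylov v1 V k \<bullet> x) *\<^sub>R krylov v1 V k) + (\<chi> i. if i \<in> S then 0 else x $ i)"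
proof -
  have "(gram_matrix v1 S V *v x) $ i
          = (\<Sum>k<CARD('n). krylov v1 V k $ i * (\<Sum>j\<in>UNIV. krylov v1 V k $ j * x $ j))
            + (if i \<in> S then 0 else x $ i)" for i
    by (simp add: matrix_vector_mult_def gram_matrix_def distrib_right sum.distrib
        sum_distrib_left sum_distrib_right mult.assoc if_distrib[where f="\<lambda>a. a * _"]
        sum.swap[where A = UNIV] cong: if_cong)
  then show ?thesis
    by (simp add: vec_eq_iff inner_vec_def sum_component mult.commute)
qed

lemma gram_matrix_mult_eq_0_iff:
  fixes x :: "real^'n::finite"
  shows "gram_matrix v1 S V *v x = 0 \<longleftrightarrow> supported S x \<and> (\<forall>k<CARD('n). x \<bullet> krylov v1 V k = 0)"
proof
  assume "supported S x \<and> (\<forall>k<CARD('n). x \<bullet> krylov v1 V k = 0)"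
  then show "gram_matrix v1 S V *v x = 0"
    by (simp add: gram_matrix_mult supported_def inner_commute vec_eq_iff)
next
  assume G: "gram_matrix v1 S V *v x = 0"
  have "x \<bullet> (\<Sum>k<CARD('n). (krylov v1 V k \<bullet> x) *\<^sub>R krylov v1 V k) = (\<Sum>k<CARD('n). (krylov v1 V k \<bullet> x)\<^sup>2)"
    by (simp add: inner_sum_right inner_commute power2_eq_square)
  moreover have "x \<bullet> (\<chi> i. if i \<in> S then 0 else x $ i) = (\<Sum>i\<in>UNIV. if i \<in> S then 0 else (x $ i)\<^sup>2)"
    by (simp add: inner_vec_def power2_eq_square if_distrib[where f="\<lambda>a. _ * a"] cong: if_cong)
  ultimately have "x \<bullet> (gram_matrix v1 S V *v x)
          = (\<Sum>k<CARD('n). (krylov v1 V k \<bullet> x)\<^sup>2) + (\<Sum>i\<in>UNIV. if i \<in> S then 0 else (x $ i)\<^sup>2)"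
    by (simp add: gram_matrix_mult inner_add_right)
  with G have "(\<Sum>k<CARD('n). (krylov v1 V k \<bullet> x)\<^sup>2) + (\<Sum>i\<in>UNIV. if i \<in> S then 0 else (x $ i)\<^sup>2) = 0"
    by simp
  then have "(\<Sum>k<CARD('n). (krylov v1 V k \<bullet> x)\<^sup>2) = 0" "(\<Sum>i\<in>UNIV. if i \<in> S then 0 else (x $ i)\<^sup>2) = 0"
    by (simp_all add: add_nonneg_eq_0_iff sum_nonneg)
  then show "supported S x \<and> (\<forall>k<CARD('n). x \<bullet> krylov v1 V k = 0)"
    by (auto simp: sum_nonneg_eq_0_iff supported_def inner_commute split: if_splits)
qed

lemma cyclic_on_iff_det_gram_matrix: "cyclic_on v1 S V \<longleftrightarrow> det (gram_matrix v1 S V) \<noteq> 0"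
proof -
  have "det (gram_matrix v1 S V) \<noteq> 0 \<longleftrightarrow> (\<forall>x. gram_matrix v1 S V *v x = 0 \<longrightarrow> x = 0)"
    using det_nz_iff_inj[of "\<lambda>x. gram_matrix v1 S V *v x"]
      linear_inj_iff_eq_0[OF matrix_vector_mul_linear] by simp
  then show ?thesis
    by (auto simp: cyclic_on_def gram_matrix_mult_eq_0_iff intro: orthogonal_krylov_first_imp_all)
qed

section \<open>A resolvent estimate\<close>

lemma linear_funpow: "linear (f :: 'a::real_vector \<Rightarrow> 'a) \<Longrightarrow> linear (f ^^ n)"
  by (induction n) (simp_all add: linear_compose[of _ f] linear_id)

lemma norm_funpow_le:
  fixes f :: "'a::real_normed_vector \<Rightarrow> 'a"
  assumes "K \<ge> 0" "\<And>y. norm (f y) \<le> K * norm y"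
  shows "norm ((f ^^ n) x) \<le> K ^ n * norm x"
proof (induction n)
  case 0
  show ?case by simp
next
  case (Suc n)
  have "norm ((f ^^ Suc n) x) \<le> K * norm ((f ^^ n) x)" using assms(2) by simp
  also have "\<dots> \<le> K * (K ^ n * norm x)" using Suc assms(1) by (rule mult_left_mono)
  finally show ?case by simp
qed

text \<open>Iterating \<open>c a = f a + b\<close>, i.e. the Neumann series of \<open>(c - f)\<^sup>-\<^sup>1 b\<close> with its remainder.\<close>

lemma funpow_resolvent_expansion:
  fixes f :: "'a::real_vector \<Rightarrow> 'a"
  assumes f: "linear f" and a: "c *\<^sub>R a = f a + b"
  shows "c ^ Suc j *\<^sub>R a = (\<Sum>i\<le>j. c ^ (j - i) *\<^sub>R (f ^^ i) b) + (f ^^ Suc j) a"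
proof (induction j)
  case 0
  show ?case using a by (simp add: add.commute)
next
  case (Suc j)
  have "c ^ Suc (Suc j) *\<^sub>R a = c *\<^sub>R (c ^ Suc j *\<^sub>R a)" by simp
  also have "\<dots> = (\<Sum>i\<le>j. c ^ (Suc j - i) *\<^sub>R (f ^^ i) b) + c *\<^sub>R (f ^^ Suc j) a"
    unfolding Suc by (auto simp: scaleR_add_right scaleR_sum_right Suc_diff_le intro!: sum.cong)
  also have "c *\<^sub>R (f ^^ Suc j) a = (f ^^ Suc j) (f a + b)"
    using linear_funpow[OF f] a by (simp add: linear_scale[symmetric] del: funpow.simps)
  also have "\<dots> = (f ^^ Suc j) (f a) + (f ^^ Suc j) b"
    by (rule linear_add[OF linear_funpow[OF f]])
  also have "(f ^^ Suc j) (f a) = (f ^^ Suc (Suc j)) a"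
    by (simp only: funpow_Suc_right o_apply)
  finally show ?case by (simp add: add.assoc add.commute)
qed

lemma resolvent_lowest_term:
  fixes f :: "real^'n::finite \<Rightarrow> real^'n"
  assumes "linear f" "c *\<^sub>R a = f a + b" "a $ v = 0" "\<And>i. i < j \<Longrightarrow> (f ^^ i) b $ v = 0"
  shows "(f ^^ j) b $ v = - ((f ^^ Suc j) a $ v)"
proof -
  have "0 = (c ^ Suc j *\<^sub>R a) $ v" using assms(3) by simp
  also have "\<dots> = ((\<Sum>i\<le>j. c ^ (j - i) *\<^sub>R (f ^^ i) b) + (f ^^ Suc j) a) $ v"
    by (simp only: funpow_resolvent_expansion[OF assms(1,2)])
  also have "\<dots> = (\<Sum>i\<le>j. c ^ (j - i) * (f ^^ i) b $ v) + (f ^^ Suc j) a $ v"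
    by (simp add: sum_component del: funpow.simps)
  also have "(\<Sum>i\<le>j. c ^ (j - i) * (f ^^ i) b $ v) = (\<Sum>i\<in>{j}. c ^ (j - i) * (f ^^ i) b $ v)"
    by (rule sum.mono_neutral_right) (auto simp: assms(4))
  finally show ?thesis by simp
qed

text \<open>For large \<open>c\<close> the lowest-order nonvanishing term of the Neumann series of
  \<open>(c - W)\<^sup>-\<^sup>1 b\<close> dominates.\<close>

lemma exists_resolvent_component_nonzero:
  fixes W :: "real^'n::finite^'n"
  assumes "((\<lambda>y. W *v y) ^^ j) b $ v \<noteq> 0"
  obtains c where "\<And>a. c *\<^sub>R a = W *v a + b \<Longrightarrow> a $ v \<noteq> 0"
proof -
  define F where "F = (\<lambda>y. W *v y)"
  define g where "g i = (F ^^ i) b $ v" for i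
  define j0 where "j0 = (LEAST j. g j \<noteq> 0)"
  have g_j0: "g j0 \<noteq> 0" and g_less: "\<And>i. i < j0 \<Longrightarrow> g i = 0"
    using assms LeastI[of "\<lambda>j. g j \<noteq> 0"] not_less_Least[of _ "\<lambda>j. g j \<noteq> 0"]
    by (auto simp: j0_def g_def F_def)
  obtain K where K: "\<And>y. norm (F y) \<le> K * norm y" "K > 0"
    using bounded_linear.pos_bounded[OF matrix_vector_mul_bounded_linear[of W]]
    by (auto simp: F_def mult.commute)
  define B where "B = K ^ Suc j0 * norm b"
  have "B \<ge> 0" using K by (simp add: B_def)
  define c where "c = K + 1 + B / \<bar>g j0\<bar>"
  have cK: "\<bar>g j0\<bar> * (c - K) = \<bar>g j0\<bar> + B" using g_j0 by (simp add: c_def field_simps)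
  have "c - K > 0" using \<open>B \<ge> 0\<close> by (simp add: c_def add_pos_nonneg)
  show thesis
  proof (rule that[of c], rule notI)
    fix a assume a: "c *\<^sub>R a = W *v a + b" and "a $ v = 0"
    have "g j0 = - ((F ^^ Suc j0) a $ v)"
      unfolding g_def using a \<open>a $ v = 0\<close> g_less
      by (intro resolvent_lowest_term) (simp_all add: F_def g_def)
    then have "\<bar>g j0\<bar> = \<bar>(F ^^ Suc j0) a $ v\<bar>" by simp
    also have "\<dots> \<le> K ^ Suc j0 * norm a"
      using component_le_norm_cart[of "(F ^^ Suc j0) a" v] norm_funpow_le[of K F "Suc j0" a] K
      by simp
    finally have ga: "\<bar>g j0\<bar> \<le> K ^ Suc j0 * norm a" .
    have "c > 0" using \<open>c - K > 0\<close> K by linarith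
    then have "c * norm a = norm (c *\<^sub>R a)" by simp
    also have "\<dots> = norm (F a + b)" using a by (simp add: F_def)
    also have "\<dots> \<le> K * norm a + norm b" using K(1)[of a] norm_triangle_ineq[of "F a" b] by simp
    finally have "(c - K) * norm a \<le> norm b" by (simp add: algebra_simps)
    then have "K ^ Suc j0 * ((c - K) * norm a) \<le> B"
      using K by (simp add: B_def mult_left_mono)
    moreover have "\<bar>g j0\<bar> * (c - K) \<le> K ^ Suc j0 * norm a * (c - K)"
      using ga \<open>c - K > 0\<close> by (simp add: mult_right_mono)
    ultimately have "\<bar>g j0\<bar> * (c - K) \<le> B" by (simp add: algebra_simps)
    with cK g_j0 show False by simp
  qed
qed

section \<open>Adding a vertex\<close>

definition matrix_unit :: "'n::finite \<Rightarrow> 'n \<Rightarrow> real^'n^'n" where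
  "matrix_unit a b = (\<chi> i j. if i = a \<and> j = b then 1 else 0)"

lemma matrix_unit_mult: "matrix_unit a b *v y = y $ b *\<^sub>R axis a 1"
proof -
  have "(matrix_unit a b *v y) $ i = (if i = a then y $ b else 0)" for i
    by (simp add: matrix_unit_def matrix_vector_mult_def if_distrib[where f="\<lambda>x. x * _"] cong: if_cong)
  then show ?thesis by (simp add: vec_eq_iff axis_def)
qed

lemma matrix_unit_sym_in_edge_space:
  assumes "E a b" "E b a"
  shows "matrix_unit a b + matrix_unit b a \<in> edge_space E"
proof -
  have entry: "(matrix_unit a b + matrix_unit b a) $ i $ j
      = (if i = a \<and> j = b then 1 else 0) + (if i = b \<and> j = a then 1 else 0)" for i j
    by (simp add: matrix_unit_def)
  have "(matrix_unit a b + matrix_unit b a) $ j $ i = (matrix_unit a b + matrix_unit b a) $ i $ j" for i j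
    unfolding entry by (simp only: conj_commute add.commute)
  moreover have "(matrix_unit a b + matrix_unit b a) $ i $ j = 0" if "\<not> E i j" for i j
  proof -
    have "\<not> (i = a \<and> j = b)" "\<not> (i = b \<and> j = a)" using assms that by blast+
    then show ?thesis unfolding entry by (simp only: if_False add_0)
  qed
  ultimately show ?thesis by (simp add: edge_space_def transpose_eq_self_iff)
qed
lemma matrix_unit_diag_in_edge_space: "E a a \<Longrightarrow> matrix_unit a a \<in> edge_space E"
  by (simp add: edge_space_def transpose_eq_self_iff matrix_unit_def)

definition matrix_supported :: "'n set \<Rightarrow> real^'n^'n \<Rightarrow> bool" where
  "matrix_supported S V \<longleftrightarrow> (\<forall>i j. i \<notin> S \<or> j \<notin> S \<longrightarrow> V $ i $ j = 0)"

lemma subspace_matrix_supported: "subspace {V. matrix_supported S V}"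
  unfolding matrix_supported_def by (rule subspace_vanishing_entries)

lemma matrix_supported_unit: "a \<in> S \<Longrightarrow> b \<in> S \<Longrightarrow> matrix_supported S (matrix_unit a b)"
  by (auto simp: matrix_supported_def matrix_unit_def)

lemma matrix_supported_mono: "matrix_supported S V \<Longrightarrow> S \<subseteq> T \<Longrightarrow> matrix_supported T V"
  by (auto simp: matrix_supported_def)

lemma matrix_supported_mult_outside:
  "matrix_supported S V \<Longrightarrow> i \<notin> S \<Longrightarrow> (V *v y) $ i = 0"
  by (simp add: matrix_supported_def matrix_vector_mult_def)

lemma matrix_supported_mult_cong:
  assumes "matrix_supported S V" "\<And>i. i \<in> S \<Longrightarrow> y $ i = z $ i"
  shows "V *v y = V *v z"
proof -
  have entry: "V $ i $ j * y $ j = V $ i $ j * z $ j" for i j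
    using assms by (cases "j \<in> S") (auto simp: matrix_supported_def)
  show ?thesis unfolding matrix_vector_mult_def entry ..
qed

lemma inner_symmetric_matrix_mult:
  fixes W :: "real^'n::finite^'n"
  assumes "transpose W = W"
  shows "x \<bullet> (W *v y) = (W *v x) \<bullet> y"
proof -
  have "x \<bullet> (W *v y) = (x v* W) \<bullet> y" by (simp add: dot_lmul_matrix)
  also have "x v* W = transpose W *v x" by simp
  finally show ?thesis using assms by simp
qed

lemma symmetric_matrix_iterate_component:
  assumes "transpose W = W"
  shows "((\<lambda>y. W *v y) ^^ j) (axis s 1) $ v1 = krylov v1 W j $ s"
proof -
  have "x \<bullet> ((\<lambda>y. W *v y) ^^ j) z = ((\<lambda>y. W *v y) ^^ j) x \<bullet> z" for x z
  proof (induction j arbitrary: x)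
    case 0
    show ?case by simp
  next
    case (Suc j)
    have "x \<bullet> ((\<lambda>y. W *v y) ^^ Suc j) z = (W *v x) \<bullet> ((\<lambda>y. W *v y) ^^ j) z"
      by (simp add: inner_symmetric_matrix_mult[OF assms])
    also have "\<dots> = ((\<lambda>y. W *v y) ^^ Suc j) x \<bullet> z"
      by (simp add: Suc funpow_Suc_right del: funpow.simps)
    finally show ?case .
  qed
  from this[of "axis v1 1" "axis s 1"] show ?thesis
    by (simp add: krylov_def inner_axis inner_axis')
qed

lemma border_matrix_mult:
  "(W + c *\<^sub>R matrix_unit u u + matrix_unit u s) *v y = W *v y + (c * y $ u + y $ s) *\<^sub>R axis u 1"
  by (simp add: matrix_vector_mult_add_rdistrib scaleR_matrix_vector_assoc[symmetric]
      matrix_unit_mult algebra_simps)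

lemma krylov_border_matrix_on_support:
  assumes "matrix_supported S W" "u \<notin> S" "i \<in> S"
  shows "krylov v1 (W + c *\<^sub>R matrix_unit u u + matrix_unit u s) k $ i = krylov v1 W k $ i"
  using assms(3)
proof (induction k arbitrary: i)
  case 0
  show ?case by simp
next
  case (Suc k)
  have "W *v krylov v1 (W + c *\<^sub>R matrix_unit u u + matrix_unit u s) k = W *v krylov v1 W k"
    using Suc.IH by (rule matrix_supported_mult_cong[OF assms(1)])
  moreover have "i \<noteq> u" using Suc.prems assms(2) by blast
  ultimately show ?case by (simp add: krylov_Suc border_matrix_mult axis_def)
qed

lemma orthogonal_krylov_border_matrix_eq_0:
  assumes "matrix_supported S W" "u \<notin> S" "cyclic_on v1 S W"
    and "supported S z" "\<forall>k. z \<bullet> krylov v1 (W + c *\<^sub>R matrix_unit u u + matrix_unit u s) k = 0"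
  shows "z = 0"
proof -
  have entry: "z $ i * krylov v1 W k $ i
                 = z $ i * krylov v1 (W + c *\<^sub>R matrix_unit u u + matrix_unit u s) k $ i" for i k
    using assms(4) krylov_border_matrix_on_support[OF assms(1,2)]
    by (cases "i \<in> S") (auto simp: supported_def)
  have "z \<bullet> krylov v1 W k = z \<bullet> krylov v1 (W + c *\<^sub>R matrix_unit u u + matrix_unit u s) k" for k
    unfolding inner_vec_def inner_real_def entry ..
  with assms(3-5) show ?thesis by (simp add: cyclic_on_def)
qed

text \<open>A vector orthogonal to the Krylov space of the border matrix \<open>B = W + c e\<^sub>u e\<^sub>u\<^sup>T + e\<^sub>u e\<^sub>s\<^sup>T\<close>
  is mapped by \<open>B\<^sup>T - c\<close> to such a vector supported on \<open>S\<close>, hence to \<open>0\<close>; unless it is itself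
  supported on \<open>S\<close>, this yields a solution of \<open>(c - W) a = e\<^sub>s\<close> with \<open>a\<^sub>v\<^sub>1 = 0\<close>, which the
  choice of \<open>c\<close> excludes.\<close>

lemma cyclic_on_insert_border_matrix:
  fixes W :: "real^'n::finite^'n"
  assumes sym: "transpose W = W" and supp: "matrix_supported S W" and cyc: "cyclic_on v1 S W"
    and "v1 \<in> S" "s \<in> S" "u \<notin> S"
    and c: "\<And>a. c *\<^sub>R a = W *v a + axis s 1 \<Longrightarrow> a $ v1 \<noteq> 0"
  shows "cyclic_on v1 (insert u S) (W + c *\<^sub>R matrix_unit u u + matrix_unit u s)"
  unfolding cyclic_on_def
proof (intro allI impI)
  define Wt where "Wt = W + c *\<^sub>R matrix_unit u u + matrix_unit u s"
  have on_S: "z = 0" if "supported S z" "\<forall>k. z \<bullet> krylov v1 Wt k = 0" for z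
    using orthogonal_krylov_border_matrix_eq_0[OF supp \<open>u \<notin> S\<close> cyc] that by (simp add: Wt_def)
  fix x :: "real^'n"
  assume x: "supported (insert u S) x" and xo: "\<forall>k. x \<bullet> krylov v1 Wt k = 0"
  have "x $ v1 = 0" using xo[rule_format, of 0] by (simp add: inner_axis)
  define x' where "x' = W *v x + x $ u *\<^sub>R axis s 1 + (c * x $ u) *\<^sub>R axis u 1 - c *\<^sub>R x"
  have "x' \<bullet> y = x \<bullet> (Wt *v y) - c * (x \<bullet> y)" for y
    unfolding Wt_def border_matrix_mult
    by (simp add: x'_def inner_symmetric_matrix_mult[OF sym]
        inner_add_left inner_add_right inner_diff_left inner_axis inner_axis' algebra_simps)
  then have "\<forall>k. x' \<bullet> krylov v1 Wt k = 0" using xo by (simp add: krylov_Suc[symmetric])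
  moreover have "supported S x'"
    unfolding supported_def
  proof (intro allI impI)
    fix i assume "i \<notin> S"
    then have "(W *v x) $ i = 0" "i \<noteq> s" using matrix_supported_mult_outside[OF supp] \<open>s \<in> S\<close> by auto
    moreover have "i \<noteq> u \<Longrightarrow> x $ i = 0" using x \<open>i \<notin> S\<close> by (simp add: supported_def)
    ultimately show "x' $ i = 0" by (cases "i = u") (simp_all add: x'_def axis_def)
  qed
  ultimately have "x' = 0" using on_S by blast
  show "x = 0"
  proof (cases "x $ u = 0")
    case True
    with x have "supported S x" by (auto simp: supported_def)
    with xo on_S show ?thesis by blast
  next
    case False
    define a where "a = (1 / x $ u) *\<^sub>R (x - x $ u *\<^sub>R axis u 1)"
    have "W *v (x - x $ u *\<^sub>R axis u 1) = W *v x"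
      using \<open>u \<notin> S\<close> by (intro matrix_supported_mult_cong[OF supp]) (auto simp: axis_def)
    then have Wa: "W *v a = (1 / x $ u) *\<^sub>R (W *v x)"
      by (simp add: a_def matrix_vector_mult_scaleR)
    have "c *\<^sub>R a = (1 / x $ u) *\<^sub>R (c *\<^sub>R (x - x $ u *\<^sub>R axis u 1))"
      by (simp add: a_def)
    also have "c *\<^sub>R (x - x $ u *\<^sub>R axis u 1) = W *v x + x $ u *\<^sub>R axis s 1"
      using \<open>x' = 0\<close> by (simp add: x'_def algebra_simps)
    also have "(1 / x $ u) *\<^sub>R (W *v x + x $ u *\<^sub>R axis s 1) = W *v a + axis s 1"
      using False by (simp add: Wa scaleR_add_right)
    finally have "c *\<^sub>R a = W *v a + axis s 1" .
    moreover have "a $ v1 = 0"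
      using \<open>x $ v1 = 0\<close> \<open>v1 \<in> S\<close> \<open>u \<notin> S\<close> by (auto simp: a_def axis_def)
    ultimately show ?thesis using c by blast
  qed
qed

lemma cyclic_on_diagonal_similar:
  fixes d :: "real^'n::finite"
  assumes sim: "\<And>y. W' *v (d * y) = d * (W *v y)"
    and d: "\<And>i. d $ i \<noteq> 0" "d $ v1 = 1" and cyc: "cyclic_on v1 S W"
  shows "cyclic_on v1 S W'"
  unfolding cyclic_on_def
proof (intro allI impI)
  have krylov_sim: "krylov v1 W' k = d * krylov v1 W k" for k
  proof (induction k)
    case 0
    show ?case using d(2) by (simp add: vec_eq_iff axis_def)
  next
    case (Suc k)
    then show ?case by (simp add: krylov_Suc sim)
  qed
  fix x :: "real^'n"
  assume "supported S x" "\<forall>k. x \<bullet> krylov v1 W' k = 0"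
  moreover have "x \<bullet> (d * y) = (d * x) \<bullet> y" for y
    by (simp add: inner_vec_def mult.left_commute mult.assoc)
  ultimately have "supported S (d * x)" "\<forall>k. (d * x) \<bullet> krylov v1 W k = 0"
    by (simp_all add: supported_def krylov_sim)
  with cyc have "d * x = 0" by (simp add: cyclic_on_def)
  with d(1) show "x = 0" by (simp add: vec_eq_iff)
qed

text \<open>Conjugating by the diagonal matrix with entry \<open>t\<close> at \<open>u\<close> balances the two off-diagonal entries
  \<open>1\<close> and \<open>t\<^sup>2\<close> of the border matrix into the symmetric pair \<open>t, t\<close>.\<close>

lemma border_matrix_symmetrization:
  fixes W :: "real^'n::finite^'n" and t :: real
  assumes supp: "matrix_supported S W" and "u \<notin> S" "s \<in> S"
  defines "d \<equiv> \<chi> i. if i = u then t else 1"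
  shows "(W + t *\<^sub>R (matrix_unit s u + matrix_unit u s) + c *\<^sub>R matrix_unit u u) *v (d * y)
           = d * ((W + c *\<^sub>R matrix_unit u u + matrix_unit u s + t\<^sup>2 *\<^sub>R matrix_unit s u) *v y)"
proof -
  have "W *v (d * y) = W *v y"
    using \<open>u \<notin> S\<close> by (intro matrix_supported_mult_cong[OF supp]) (auto simp: d_def)
  moreover have "(W *v y) $ u = 0" using matrix_supported_mult_outside[OF supp \<open>u \<notin> S\<close>] .
  moreover have "u \<noteq> s" using assms by blast
  ultimately show ?thesis
    by (simp add: vec_eq_iff matrix_vector_mult_add_rdistrib scaleR_matrix_vector_assoc[symmetric]
        matrix_unit_mult d_def axis_def power2_eq_square algebra_simps)
qed

lemma cyclic_on_krylov_component_nonzero: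
  assumes "cyclic_on v1 S W" "s \<in> S"
  obtains j where "krylov v1 W j $ s \<noteq> 0"
proof (rule ccontr)
  assume "\<not> thesis"
  with that have "\<forall>k. axis s 1 \<bullet> krylov v1 W k = 0" by (auto simp: inner_axis')
  moreover have "supported S (axis s (1::real))" using assms(2) by (auto simp: supported_def axis_def)
  ultimately have "axis s (1::real) = 0" using assms(1) unfolding cyclic_on_def by blast
  then show False by simp
qed

lemma symmetric_border_matrix_in_edge_space:
  assumes "W \<in> edge_space E" "E s u" "E u s" "E u u"
  shows "W + t *\<^sub>R (matrix_unit s u + matrix_unit u s) + c *\<^sub>R matrix_unit u u \<in> edge_space E"
proof -
  have "t *\<^sub>R (matrix_unit s u + matrix_unit u s) \<in> edge_space E"
    using matrix_unit_sym_in_edge_space[of E s u, OF assms(2,3)]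
    by (rule subspace_scale[OF subspace_edge_space])
  moreover have "c *\<^sub>R matrix_unit u u \<in> edge_space E"
    using matrix_unit_diag_in_edge_space[of E u, OF assms(4)]
    by (rule subspace_scale[OF subspace_edge_space])
  ultimately show ?thesis using assms(1) by (intro subspace_add[OF subspace_edge_space])
qed

lemma matrix_supported_symmetric_border_matrix:
  assumes "matrix_supported S W" "s \<in> S"
  shows "matrix_supported (insert u S) (W + t *\<^sub>R (matrix_unit s u + matrix_unit u s) + c *\<^sub>R matrix_unit u u)"
proof -
  define T where "T = {V. matrix_supported (insert u S) V}"
  have T: "subspace T" unfolding T_def by (rule subspace_matrix_supported)
  have "W \<in> T" unfolding T_def using assms(1) by (auto intro: matrix_supported_mono)
  moreover have "matrix_unit a b \<in> T" if "a \<in> {s, u}" "b \<in> {s, u}" for a b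
    unfolding T_def using that assms(2) by (auto intro: matrix_supported_unit)
  ultimately have "W + t *\<^sub>R (matrix_unit s u + matrix_unit u s) + c *\<^sub>R matrix_unit u u \<in> T"
    by (intro subspace_add[OF T] subspace_scale[OF T]) auto
  then show ?thesis by (simp add: T_def)
qed

lemma exists_cyclic_on_insert:
  fixes W :: "real^'n::finite^'n"
  assumes W: "W \<in> edge_space E" "matrix_supported S W" "cyclic_on v1 S W"
    and "v1 \<in> S" "s \<in> S" "u \<notin> S" and E: "E s u" "E u s" "E u u"
  obtains W' where "W' \<in> edge_space E" "matrix_supported (insert u S) W'"
    "cyclic_on v1 (insert u S) W'"
proof -
  have sym: "transpose W = W" using W(1) by (simp add: edge_space_def)
  obtain j where "krylov v1 W j $ s \<noteq> 0"
    using cyclic_on_krylov_component_nonzero[OF W(3) \<open>s \<in> S\<close>] by blast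
  then have "((\<lambda>y. W *v y) ^^ j) (axis s 1) $ v1 \<noteq> 0"
    by (simp add: symmetric_matrix_iterate_component[OF sym])
  then obtain c where c: "\<And>a. c *\<^sub>R a = W *v a + axis s 1 \<Longrightarrow> a $ v1 \<noteq> 0"
    by (rule exists_resolvent_component_nonzero) blast
  define Wb where "Wb = W + c *\<^sub>R matrix_unit u u + matrix_unit u s"
  have "cyclic_on v1 (insert u S) Wb"
    unfolding Wb_def using sym W(2,3) \<open>v1 \<in> S\<close> \<open>s \<in> S\<close> \<open>u \<notin> S\<close> c
    by (rule cyclic_on_insert_border_matrix)
  then have "det (gram_matrix v1 (insert u S) (Wb + 0 *\<^sub>R matrix_unit s u)) \<noteq> 0"
    by (simp add: cyclic_on_iff_det_gram_matrix)
  then obtain \<sigma> where "0 < \<sigma>" and \<sigma>: "det (gram_matrix v1 (insert u S) (Wb + \<sigma> *\<^sub>R matrix_unit s u)) \<noteq> 0"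
    using poly_funs_nonzero_near[OF poly_funs_det_gram_matrix _ zero_less_one] by blast
  define t where "t = sqrt \<sigma>"
  have "t > 0" "t\<^sup>2 = \<sigma>" using \<open>0 < \<sigma>\<close> by (simp_all add: t_def)
  define W' where "W' = W + t *\<^sub>R (matrix_unit s u + matrix_unit u s) + c *\<^sub>R matrix_unit u u"
  define d :: "real^'n" where "d = (\<chi> i. if i = u then t else 1)"
  have "cyclic_on v1 (insert u S) W'"
  proof (rule cyclic_on_diagonal_similar)
    show "W' *v (d * y) = d * ((Wb + \<sigma> *\<^sub>R matrix_unit s u) *v y)" for y
      using border_matrix_symmetrization[OF W(2) \<open>u \<notin> S\<close> \<open>s \<in> S\<close>, of t c y] \<open>t\<^sup>2 = \<sigma>\<close>
      by (simp add: W'_def d_def Wb_def)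
    show "d $ i \<noteq> 0" for i using \<open>t > 0\<close> by (simp add: d_def)
    show "d $ v1 = 1" using \<open>v1 \<in> S\<close> \<open>u \<notin> S\<close> by (auto simp: d_def)
    show "cyclic_on v1 (insert u S) (Wb + \<sigma> *\<^sub>R matrix_unit s u)"
      using \<sigma> by (simp add: cyclic_on_iff_det_gram_matrix)
  qed
  moreover have "W' \<in> edge_space E"
    unfolding W'_def using W(1) E by (rule symmetric_border_matrix_in_edge_space)
  moreover have "matrix_supported (insert u S) W'"
    unfolding W'_def using W(2) \<open>s \<in> S\<close> by (rule matrix_supported_symmetric_border_matrix)
  ultimately show thesis using that by blast
qed

section \<open>Cyclic matrices in \<open>H_Gamma\<close>\<close>

lemma rtranclp_leaves_set:
  assumes "R\<^sup>*\<^sup>* a b" "a \<in> S" "b \<notin> S"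
  shows "\<exists>x y. x \<in> S \<and> y \<notin> S \<and> R x y"
  using assms by (induction rule: rtranclp_induct) auto

lemma cyclic_on_singleton: "cyclic_on v1 {v1} V"
  unfolding cyclic_on_def
proof (intro allI impI)
  fix x :: "real^'a" assume x: "supported {v1} x" and "\<forall>k. x \<bullet> krylov v1 V k = 0"
  then have "x \<bullet> krylov v1 V 0 = 0" by blast
  then have "x $ v1 = 0" by (simp add: inner_axis)
  with x show "x = 0" by (auto simp: supported_def vec_eq_iff)
qed

lemma exists_cyclic_on_UNIV:
  fixes E :: "'n::finite \<Rightarrow> 'n \<Rightarrow> bool" and v1 :: 'n
  assumes "symp E" "\<forall>i. E i i" "\<forall>i j. E\<^sup>*\<^sup>* i j"
  obtains W where "W \<in> edge_space E" "cyclic_on v1 UNIV W"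
proof -
  have "\<exists>W' \<in> edge_space E. cyclic_on v1 UNIV W'"
    if "v1 \<in> S" "W \<in> edge_space E" "matrix_supported S W" "cyclic_on v1 S W" for S W
    using that
  proof (induction "card (- S)" arbitrary: S W rule: less_induct)
    case less
    show ?case
    proof (cases "S = UNIV")
      case True
      with less.prems show ?thesis by blast
    next
      case False
      then obtain w where "w \<notin> S" by blast
      then obtain a b where ab: "a \<in> S" "b \<notin> S" "E a b"
        using rtranclp_leaves_set[of E v1 w S] assms(3) less.prems(1) by blast
      then have "E b a" "E b b" using assms(1,2) by (auto dest: sympD)
      then obtain W' where W': "W' \<in> edge_space E" "matrix_supported (insert b S) W'"
        "cyclic_on v1 (insert b S) W'"
        using exists_cyclic_on_insert[OF less.prems(2,3,4,1) ab] by blast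
      have "card (- S - {b}) < card (- S)"
        using \<open>b \<notin> S\<close> by (intro card_Diff1_less) simp_all
      then have "card (- insert b S) < card (- S)" by (simp add: Compl_insert)
      with less.hyps less.prems(1) W' show ?thesis by blast
    qed
  qed
  moreover have "(0 :: real^'n^'n) \<in> edge_space E" by (rule subspace_0[OF subspace_edge_space])
  moreover have "matrix_supported {v1} (0 :: real^'n^'n)" by (simp add: matrix_supported_def)
  ultimately show thesis using that cyclic_on_singleton by blast
qed

lemma mat_mult_vector: "mat c *v x = c *\<^sub>R (x :: real^'n::finite)"
proof -
  have "(mat c *v x) $ i = c * x $ i" for i
    by (simp add: mat_def matrix_vector_mult_def if_distrib[where f="\<lambda>a. a * _"] cong: if_cong)
  then show ?thesis by (simp add: vec_eq_iff)
qed

lemma mat_in_edge_space: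
  assumes "\<And>i. E i i"
  shows "mat c \<in> edge_space E"
proof -
  have "mat c $ i $ j = 0" if "\<not> E i j" for i j
    using assms[of i] that by (cases "i = j") (simp_all add: mat_def)
  then show ?thesis by (simp add: edge_space_def)
qed

lemma exists_plus_mat_in_H_Gamma:
  assumes "W \<in> edge_space E" "\<And>i. E i i"
  obtains c where "W + mat c \<in> H_Gamma E"
proof -
  obtain K where K: "\<And>y. norm (W *v y) \<le> norm y * K" "K > 0"
    using bounded_linear.pos_bounded[OF matrix_vector_mul_bounded_linear[of W]] by blast
  have "W + mat (K + 1) \<in> edge_space E"
    using assms by (intro subspace_add[OF subspace_edge_space] mat_in_edge_space)
  moreover have "x \<bullet> ((W + mat (K + 1)) *v x) > 0" if "x \<noteq> 0" for x
  proof -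
    have "\<bar>x \<bullet> (W *v x)\<bar> \<le> norm x * norm (W *v x)" by (rule Cauchy_Schwarz_ineq2)
    also have "\<dots> \<le> norm x * (norm x * K)" using K(1)[of x] by (simp add: mult_left_mono)
    finally have lower: "x \<bullet> (W *v x) \<ge> - (K * (norm x)\<^sup>2)"
      by (simp add: power2_eq_square algebra_simps)
    have eq: "x \<bullet> ((W + mat (K + 1)) *v x) = x \<bullet> (W *v x) + (K + 1) * (norm x)\<^sup>2"
      by (simp add: matrix_vector_mult_add_rdistrib mat_mult_vector inner_add_right power2_norm_eq_inner)
    have "(norm x)\<^sup>2 > 0" using that by simp
    with lower show ?thesis unfolding eq distrib_right mult_1 by linarith
  qed
  ultimately have "W + mat (K + 1) \<in> H_Gamma E" by (simp add: H_Gamma_def)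
  then show thesis by (rule that)
qed

lemma cyclic_on_plus_mat:
  assumes "cyclic_on v1 S W"
  shows "cyclic_on v1 S (W + mat c)"
proof -
  have krylov_in_span: "krylov v1 W k \<in> span (range (krylov v1 (W + mat c)))" for k
  proof (induction k)
    case 0
    have "krylov v1 (W + mat c) 0 \<in> range (krylov v1 (W + mat c))" by blast
    then show ?case by (simp add: span_base)
  next
    case (Suc k)
    have "krylov v1 W (Suc k) = (W + mat c) *v krylov v1 W k - c *\<^sub>R krylov v1 W k"
      by (simp add: krylov_Suc matrix_vector_mult_add_rdistrib mat_mult_vector)
    then show ?case
      using matrix_vector_mult_span_krylov[OF Suc] span_scale[OF Suc] by (simp add: span_diff)
  qed
  show ?thesis
    unfolding cyclic_on_def
  proof (intro allI impI)
    fix x :: "real^'a"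
    assume "supported S x" "\<forall>k. x \<bullet> krylov v1 (W + mat c) k = 0"
    moreover from this(2) have "x \<bullet> krylov v1 W k = 0" for k
      using orthogonal_to_span[OF krylov_in_span[of k], of x] by (auto simp: orthogonal_def)
    ultimately show "x = 0" using assms by (simp add: cyclic_on_def)
  qed
qed

lemma exists_cyclic_in_H_Gamma:
  fixes E :: "'n::finite \<Rightarrow> 'n \<Rightarrow> bool" and v1 :: 'n
  assumes "symp E" "\<forall>i. E i i" "\<forall>i j. E\<^sup>*\<^sup>* i j"
  obtains V where "V \<in> H_Gamma E" "cyclic_on v1 UNIV V"
proof -
  obtain W where "W \<in> edge_space E" "cyclic_on v1 UNIV W"
    using exists_cyclic_on_UNIV[OF assms] by blast
  moreover obtain c where "W + mat c \<in> H_Gamma E"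
    using exists_plus_mat_in_H_Gamma \<open>W \<in> edge_space E\<close> assms(2) by blast
  ultimately show thesis using that cyclic_on_plus_mat by blast
qed

lemma dim_L_0_eq_0_if_cyclic:
  fixes V :: "real^'n::finite^'n"
  assumes "cyclic_on v1 UNIV V"
  shows "dim (L_0 v1 V) = 0"
proof -
  have "dim (range (krylov v1 V)) = DIM(real^'n)"
  proof (rule ccontr)
    assume "dim (range (krylov v1 V)) \<noteq> DIM(real^'n)"
    then have "dim (range (krylov v1 V)) < DIM(real^'n)"
      using dim_subset_UNIV[of "range (krylov v1 V)"] by simp
    then obtain x where "x \<noteq> 0" "\<And>y. y \<in> span (range (krylov v1 V)) \<Longrightarrow> orthogonal x y"
      using orthogonal_to_subspace_exists by blast
    then have "x \<bullet> krylov v1 V k = 0" for k by (simp add: span_base orthogonal_def)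
    with assms \<open>x \<noteq> 0\<close> show False by (simp add: cyclic_on_def supported_def)
  qed
  then have "l_V v1 V = UNIV" unfolding dim_eq_full by (simp add: l_V_eq_span_krylov)
  then have "L_minus v1 V = UNIV" by (auto simp: L_minus_def)
  then have "L_0 v1 V \<subseteq> {0}"
  proof (intro subsetI)
    fix z assume "L_minus v1 V = UNIV" "z \<in> L_0 v1 V"
    then have "z \<bullet> z = 0" unfolding L_0_def by blast
    then show "z \<in> {0}" by simp
  qed
  then show ?thesis by simp
qed

theorem mainTheorem19:
  fixes E :: "'n::finite \<Rightarrow> 'n \<Rightarrow> bool" and v1 :: 'n
  assumes "symp E"
    and "\<forall>i. E i i"
    and "\<forall>i j. E\<^sup>*\<^sup>* i j"
  shows "\<exists>S. S \<subseteq> H_Gamma E \<and> openin (top_of_set (H_Gamma E)) S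
            \<and> H_Gamma E \<subseteq> closure S
            \<and> lower_dim E (H_Gamma E - S)
            \<and> (\<forall>V \<in> S. dim (L_0 v1 V) = 0)"
proof -
  obtain W where W: "W \<in> H_Gamma E" "cyclic_on v1 UNIV W"
    using exists_cyclic_in_H_Gamma[OF assms] by blast
  define p where "p = (\<lambda>V. det (gram_matrix v1 UNIV V))"
  have p: "p \<in> poly_funs" "p W \<noteq> 0"
    using W(2) poly_funs_det_gram_matrix by (simp_all add: p_def cyclic_on_iff_det_gram_matrix)
  define S where "S = {V \<in> H_Gamma E. p V \<noteq> 0}"
  have "openin (top_of_set (H_Gamma E)) S"
    unfolding S_def using p(1) by (rule openin_poly_funs_nonzero)
  moreover have "H_Gamma E \<subseteq> closure S"
    unfolding S_def using convex_H_Gamma p(1) W(1) p(2) by (rule convex_subset_closure_poly_funs_nonzero)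
  moreover have "lower_dim E (H_Gamma E - S)"
    unfolding lower_dim_def using p W(1) by (auto simp: S_def H_Gamma_def)
  moreover have "\<forall>V \<in> S. dim (L_0 v1 V) = 0"
  proof
    fix V assume "V \<in> S"
    then have "cyclic_on v1 UNIV V" by (simp add: S_def p_def cyclic_on_iff_det_gram_matrix)
    then show "dim (L_0 v1 V) = 0" by (rule dim_L_0_eq_0_if_cyclic)
  qed
  ultimately show ?thesis by (intro exI[of _ S]) (auto simp: S_def)
qed

end
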